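(* A C*-algebra $A$ is AF if and only if there exists a map $\rho\colon A\to A$ such that $\|a-\rho(a)\|<1$ for every $a\in A$ and $C^*(\{\rho(a)\}_{a\in F})$ is finite-dimensional for every finite subset $F$ of $A$.
   Context: A C*-algebra is AF if it has a directed family of finite-dimensional C*-subalgebras with dense union. $C^*(S)$ denotes the C*-subalgebra generated by $S$. The map $\rho$ is an arbitrary function (not assumed linear or continuous). *)

theory Defs
  imports "HOL-Analysis.Analysis"
begin

text \<open>The real scalar multiplication of the
underlying real Banach algebra is the restriction of the complex one.\<close>

class cstar_algebra = real_normed_algebra + banach +
  fixes scaleC :: "complex \<Rightarrow> 'a \<Rightarrow> 'a"
    and adj :: "'a \<Rightarrow> 'a"
  assumes scaleC_of_real: "scaleC (complex_of_real r) x = scaleR r x"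
    and scaleC_add_right: "scaleC c (x + y) = scaleC c x + scaleC c y"
    and scaleC_add_left: "scaleC (c + d) x = scaleC c x + scaleC d x"
    and scaleC_scaleC: "scaleC c (scaleC d x) = scaleC (c * d) x"
    and norm_scaleC: "norm (scaleC c x) = cmod c * norm x"
    and mult_scaleC_left: "scaleC c x * y = scaleC c (x * y)"
    and mult_scaleC_right: "x * scaleC c y = scaleC c (x * y)"
    and adj_adj: "adj (adj x) = x"
    and adj_add: "adj (x + y) = adj x + adj y"
    and adj_scaleC: "adj (scaleC c x) = scaleC (cnj c) (adj x)"
    and adj_mult: "adj (x * y) = adj y * adj x"
    and cstar_identity: "norm (adj x * x) = (norm x)\<^sup>2"

definition cstar_subalgebra :: "'a::cstar_algebra set \<Rightarrow> bool" where
  "cstar_subalgebra B \<longleftrightarrow>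
     0 \<in> B \<and>
     (\<forall>x\<in>B. \<forall>y\<in>B. x + y \<in> B) \<and>
     (\<forall>c. \<forall>x\<in>B. scaleC c x \<in> B) \<and>
     (\<forall>x\<in>B. \<forall>y\<in>B. x * y \<in> B) \<and>
     (\<forall>x\<in>B. adj x \<in> B) \<and>
     closed B"

definition cstar_gen :: "'a::cstar_algebra set \<Rightarrow> 'a set" where
  "cstar_gen S = \<Inter>{B. cstar_subalgebra B \<and> S \<subseteq> B}"

definition cspan :: "'a::cstar_algebra set \<Rightarrow> 'a set" where
  "cspan E = {x. \<exists>c. x = (\<Sum>e\<in>E. scaleC (c e) e)}"

definition fin_dim :: "'a::cstar_algebra set \<Rightarrow> bool" where
  "fin_dim B \<longleftrightarrow> (\<exists>E. finite E \<and> B \<subseteq> cspan E)"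

definition AF_algebra :: "'a::cstar_algebra itself \<Rightarrow> bool" where
  "AF_algebra _ \<longleftrightarrow>
     (\<exists>\<F> :: 'a set set.
        \<F> \<noteq> {} \<and>
        (\<forall>B\<in>\<F>. cstar_subalgebra B \<and> fin_dim B) \<and>
        (\<forall>B1\<in>\<F>. \<forall>B2\<in>\<F>. \<exists>B3\<in>\<F>. B1 \<union> B2 \<subseteq> B3) \<and>
        closure (\<Union>\<F>) = UNIV)"

end

theory Submission
  imports Defs
begin

text \<open>If \<open>A\<close> is AF, choose \<open>\<rho> a\<close> in the dense union within distance 1 of \<open>a\<close>; by
directedness the finitely many values \<open>\<rho> ` F\<close> lie in a single finite-dimensional
C*-subalgebra, which then contains \<open>C*(\<rho> ` F)\<close>. Conversely, the algebras
\<open>C*(\<rho> ` F)\<close> for finite \<open>F\<close> form a directed family of finite-dimensional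
C*-subalgebras; their union is closed under scaling and meets every unit ball,
hence every ball, so it is dense.\<close>

lemma cstar_subalgebra_cstar_gen: "cstar_subalgebra (cstar_gen S)"
  unfolding cstar_subalgebra_def cstar_gen_def
  by (auto simp: cstar_subalgebra_def intro!: closed_Inter)

lemma cstar_gen_superset: "S \<subseteq> cstar_gen S"
  unfolding cstar_gen_def by auto

lemma cstar_gen_minimal: "cstar_subalgebra B \<Longrightarrow> S \<subseteq> B \<Longrightarrow> cstar_gen S \<subseteq> B"
  unfolding cstar_gen_def by auto

lemma cstar_gen_mono: "S \<subseteq> T \<Longrightarrow> cstar_gen S \<subseteq> cstar_gen T"
  by (meson cstar_gen_superset cstar_gen_minimal cstar_subalgebra_cstar_gen order_trans)

lemma cstar_subalgebra_scaleR: "cstar_subalgebra B \<Longrightarrow> x \<in> B \<Longrightarrow> scaleR r x \<in> B"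
  unfolding cstar_subalgebra_def by (metis scaleC_of_real)

lemma fin_dim_subset: "fin_dim B \<Longrightarrow> A \<subseteq> B \<Longrightarrow> fin_dim A"
  unfolding fin_dim_def by blast

lemma directed_family_finite_subset:
  assumes "\<F> \<noteq> {}" and "\<forall>B1\<in>\<F>. \<forall>B2\<in>\<F>. \<exists>B3\<in>\<F>. B1 \<union> B2 \<subseteq> B3"
    and "finite S" and "S \<subseteq> \<Union>\<F>"
  shows "\<exists>B\<in>\<F>. S \<subseteq> B"
  using assms(3,4)
proof (induction S rule: finite_induct)
  case empty
  then show ?case using assms(1) by blast
next
  case (insert x S)
  then obtain B B' where "B \<in> \<F>" "S \<subseteq> B" "B' \<in> \<F>" "x \<in> B'" by auto
  moreover obtain B3 where "B3 \<in> \<F>" "B \<union> B' \<subseteq> B3"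
    using assms(2) \<open>B \<in> \<F>\<close> \<open>B' \<in> \<F>\<close> by blast
  ultimately show ?case by blast
qed

text \<open>To come within \<open>e\<close> of \<open>x\<close>, approximate \<open>x / e\<close> and scale back by \<open>e\<close>.\<close>

lemma dense_if_scaling_invariant_unit_approx:
  fixes S :: "'a::real_normed_vector set"
  assumes scale: "\<And>r y. y \<in> S \<Longrightarrow> scaleR r y \<in> S"
    and approx: "\<And>a. \<exists>y\<in>S. norm (a - y) < 1"
  shows "closure S = UNIV"
proof -
  have "\<exists>y\<in>S. dist y x < e" if "e > 0" for x and e :: real
  proof -
    obtain y where "y \<in> S" and y: "norm (x /\<^sub>R e - y) < 1"
      using approx by blast
    have "x - e *\<^sub>R y = e *\<^sub>R (x /\<^sub>R e - y)"
      using \<open>e > 0\<close> by (simp add: scaleR_diff_right)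
    then have "norm (x - e *\<^sub>R y) = e * norm (x /\<^sub>R e - y)"
      using \<open>e > 0\<close> by simp
    also have "\<dots> < e" using y \<open>e > 0\<close> by simp
    finally show ?thesis
      using scale[OF \<open>y \<in> S\<close>] by (auto simp: dist_norm norm_minus_commute)
  qed
  then show ?thesis by (auto simp: closure_approachable)
qed

lemma AF_algebra_imp_approximating_map:
  assumes "AF_algebra TYPE('a::cstar_algebra)"
  obtains \<rho> :: "'a::cstar_algebra \<Rightarrow> 'a"
  where "\<And>a. norm (a - \<rho> a) < 1"
    and "\<And>F. finite F \<Longrightarrow> fin_dim (cstar_gen (\<rho> ` F))"
proof -
  obtain \<F> :: "'a set set" where ne: "\<F> \<noteq> {}"
    and sub: "\<forall>B\<in>\<F>. cstar_subalgebra B \<and> fin_dim B"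
    and dir: "\<forall>B1\<in>\<F>. \<forall>B2\<in>\<F>. \<exists>B3\<in>\<F>. B1 \<union> B2 \<subseteq> B3"
    and dense: "closure (\<Union>\<F>) = UNIV"
    using assms unfolding AF_algebra_def by (elim exE conjE)
  have "\<forall>a. \<exists>y. y \<in> \<Union>\<F> \<and> norm (a - y) < 1"
  proof
    fix a :: 'a
    have "a \<in> closure (\<Union>\<F>)" using dense by simp
    then obtain y where "y \<in> \<Union>\<F>" "dist y a < 1"
      unfolding closure_approachable using zero_less_one by blast
    then show "\<exists>y. y \<in> \<Union>\<F> \<and> norm (a - y) < 1"
      by (auto simp: dist_norm norm_minus_commute)
  qed
  then obtain \<rho> where \<rho>: "\<And>a. \<rho> a \<in> \<Union>\<F> \<and> norm (a - \<rho> a) < 1"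
    by metis
  have "fin_dim (cstar_gen (\<rho> ` F))" if "finite F" for F
  proof -
    obtain B where "B \<in> \<F>" "\<rho> ` F \<subseteq> B"
      using directed_family_finite_subset[OF ne dir] \<rho> \<open>finite F\<close> by blast
    with sub show ?thesis
      by (meson cstar_gen_minimal fin_dim_subset)
  qed
  then show thesis using that \<rho> by blast
qed

lemma approximating_map_imp_AF_algebra:
  fixes \<rho> :: "'a::cstar_algebra \<Rightarrow> 'a"
  assumes approx: "\<And>a. norm (a - \<rho> a) < 1"
    and fin: "\<And>F. finite F \<Longrightarrow> fin_dim (cstar_gen (\<rho> ` F))"
  shows "AF_algebra TYPE('a)"
proof -
  define \<F> where "\<F> = {cstar_gen (\<rho> ` F) | F. finite F}"
  have nonempty: "\<F> \<noteq> {}"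
    unfolding \<F>_def by blast
  have subalgebras: "\<forall>B\<in>\<F>. cstar_subalgebra B \<and> fin_dim B"
    unfolding \<F>_def using cstar_subalgebra_cstar_gen fin by blast
  have directed: "\<forall>B1\<in>\<F>. \<forall>B2\<in>\<F>. \<exists>B3\<in>\<F>. B1 \<union> B2 \<subseteq> B3"
  proof (intro ballI)
    fix B1 B2 assume "B1 \<in> \<F>" "B2 \<in> \<F>"
    then obtain F1 F2 where "finite F1" "finite F2"
      and "B1 = cstar_gen (\<rho> ` F1)" "B2 = cstar_gen (\<rho> ` F2)"
      unfolding \<F>_def by blast
    moreover have "cstar_gen (\<rho> ` (F1 \<union> F2)) \<in> \<F>"
      unfolding \<F>_def using \<open>finite F1\<close> \<open>finite F2\<close> by blast
    ultimately show "\<exists>B3\<in>\<F>. B1 \<union> B2 \<subseteq> B3"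
      by (metis Un_least Un_upper1 Un_upper2 cstar_gen_mono image_mono)
  qed
  have dense: "closure (\<Union>\<F>) = UNIV"
  proof (rule dense_if_scaling_invariant_unit_approx)
    show "scaleR r y \<in> \<Union>\<F>" if "y \<in> \<Union>\<F>" for r y
      using that subalgebras cstar_subalgebra_scaleR by blast
    show "\<exists>y\<in>\<Union>\<F>. norm (a - y) < 1" for a
    proof
      show "\<rho> a \<in> \<Union>\<F>"
        unfolding \<F>_def using cstar_gen_superset[of "\<rho> ` {a}"] by blast
    qed (rule approx)
  qed
  show ?thesis
    unfolding AF_algebra_def by (intro exI[of _ \<F>] conjI nonempty subalgebras directed dense)
qed

theorem lemma6p1:
  shows "AF_algebra TYPE('a::cstar_algebra) \<longleftrightarrow>
    (\<exists>\<rho> :: 'a \<Rightarrow> 'a.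
       (\<forall>a. norm (a - \<rho> a) < 1) \<and>
       (\<forall>F. finite F \<longrightarrow> fin_dim (cstar_gen (\<rho> ` F))))"
proof
  assume "AF_algebra TYPE('a)"
  then show "\<exists>\<rho> :: 'a \<Rightarrow> 'a. (\<forall>a. norm (a - \<rho> a) < 1) \<and>
      (\<forall>F. finite F \<longrightarrow> fin_dim (cstar_gen (\<rho> ` F)))"
    by (rule AF_algebra_imp_approximating_map) blast
qed (blast intro: approximating_map_imp_AF_algebra)

end
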